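(* For every $h\in C_\mathbb{R}(\mathcal{X}^n)$ and every $\mu_1,\dots,\mu_n\in\mathrm{Prob}(\mathcal{X})$, $$P(h)\ge P_\mathrm{sym}(h:\mu_1,\dots,\mu_n)+\sum_{i=1}^nS(\mu_i),$$ and the following are equivalent: (i) $P(h)=P_\mathrm{sym}(h:\mu_1,\dots,\mu_n)+\sum_{i=1}^nS(\mu_i)$; (ii) $\mu_1,\dots,\mu_n$ are the marginals of the Gibbs measure $\mu_h(\mathbf{x})=Z_h^{-1}e^{h(\mathbf{x})}$, $\mathbf{x}\in\mathcal{X}^n$, $Z_h=\sum_{\mathbf{x}\in\mathcal{X}^n}e^{h(\mathbf{x})}$; (iii) for each $i$, $\mu_i$ is the Gibbs measure on $\mathcal{X}$ associated with $h_i(x)=\log\sum_{x_1,\dots,x_{i-1},x_{i+1},\dots,x_n\in\mathcal{X}}e^{h(x_1,\dots,x_{i-1},x,x_{i+1},\dots,x_n)}$.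
   Context: $\mathcal{X}=\{t_1,\dots,t_d\}$ is a finite set with a fixed order $t_1<\dots<t_d$; $n\in\mathbb{N}$. $\mathrm{Prob}(\mathcal{X}^k)$ is the set of probability measures on $\mathcal{X}^k$, $C_\mathbb{R}(\mathcal{X}^k)$ the real functions on $\mathcal{X}^k$ with max-norm. Shannon entropy: $S(\mu)=-\sum_t\mu(t)\log\mu(t)$. Pressure: $P(h)=\log\sum_{\mathbf{x}\in\mathcal{X}^k}e^{h(\mathbf{x})}$; the Gibbs measure associated with $h$ is $e^{h(\mathbf{x})-P(h)}$. For $\mathbf{x}=(x_1,\dots,x_N)\in\mathcal{X}^N$ its type is $\nu_\mathbf{x}(t)=\#\{j:x_j=t\}/N$. $\mathcal{X}_\le^N$ is the set of sequences in $\mathcal{X}^N$ of the form $(t_1,\dots,t_1,t_2,\dots,t_2,\dots,t_d,\dots,t_d)$ (nondecreasing). $S_N$ acts on $\mathcal{X}^N$ by $\sigma(\mathbf{x})=(x_{\sigma^{-1}(1)},\dots,x_{\sigma^{-1}(N)})$. An approximating sequence for $(\mu_1,\dots,\mu_n)$ is $\Xi(N)=(\xi_1(N),\dots,\xi_n(N))$ with $\xi_i(N)\in\mathcal{X}_\le^N$ and $\nu_{\xi_i(N)}(t)\to\mu_i(t)$ as $N\to\infty$ for all $t\in\mathcal{X}$, $1\le i\le n$. For $h\in C_\mathbb{R}(\mathcal{X}^n)$ and $\mathbf{x}_i=(x_{i1},\dots,x_{iN})\in\mathcal{X}^N$, $\kappa_N(h(\mathbf{x}_1,\dots,\mathbf{x}_n))=\frac1N\sum_{j=1}^Nh(x_{1j},\dots,x_{nj})$.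 The mutual pressure is $$P_\mathrm{sym}(h:\mu_1,\dots,\mu_n)=\limsup_{N\to\infty}\frac1N\log\Biggl[\frac1{(N!)^n}\sum_{\sigma_1,\dots,\sigma_n\in S_N}\exp\bigl(N\kappa_N(h(\sigma_1(\xi_1(N)),\dots,\sigma_n(\xi_n(N))))\bigr)\Biggr]$$ (independent of the approximating sequence). *)

theory Defs
  imports "HOL-Analysis.Analysis" "HOL-Combinatorics.Permutations"
begin

text \<open>The alphabet X is a finite linearly ordered type 'a. Points of X^k are
  modelled as extensional functions in PiE {0..<k} (%_. UNIV) (index i = coordinate i+1).\<close>

definition cube :: "nat \<Rightarrow> (nat \<Rightarrow> 'a) set" where
  "cube k = ({0..<k} \<rightarrow>\<^sub>E (UNIV :: 'a set))"

definition is_prob :: "('a::finite \<Rightarrow> real) \<Rightarrow> bool" where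
  "is_prob \<mu> \<longleftrightarrow> (\<forall>t. 0 \<le> \<mu> t) \<and> (\<Sum>t\<in>UNIV. \<mu> t) = 1"

definition entropy :: "('a::finite \<Rightarrow> real) \<Rightarrow> real" where
  "entropy \<mu> = - (\<Sum>t\<in>UNIV. (if \<mu> t = 0 then 0 else \<mu> t * ln (\<mu> t)))"

definition pressure :: "'b set \<Rightarrow> ('b \<Rightarrow> real) \<Rightarrow> real" where
  "pressure A f = ln (\<Sum>x\<in>A. exp (f x))"

definition gibbs :: "'b set \<Rightarrow> ('b \<Rightarrow> real) \<Rightarrow> 'b \<Rightarrow> real" where
  "gibbs A f x = exp (f x - pressure A f)"

definition gibbs_marginal :: "nat \<Rightarrow> ((nat \<Rightarrow> 'a::finite) \<Rightarrow> real) \<Rightarrow> nat \<Rightarrow> 'a \<Rightarrow> real" where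
  "gibbs_marginal n h i t = (\<Sum>x\<in>{x\<in>cube n. x i = t}. gibbs (cube n) h x)"

definition partial_log_sum :: "nat \<Rightarrow> ((nat \<Rightarrow> 'a::finite) \<Rightarrow> real) \<Rightarrow> nat \<Rightarrow> 'a \<Rightarrow> real" where
  "partial_log_sum n h i t = ln (\<Sum>x\<in>{x\<in>cube n. x i = t}. exp (h x))"

definition seq_type :: "'a list \<Rightarrow> 'a \<Rightarrow> real" where
  "seq_type xs t = real (count_list xs t) / real (length xs)"

definition sorted_seqs :: "nat \<Rightarrow> ('a::linorder) list set" where
  "sorted_seqs N = {xs. length xs = N \<and> sorted xs}"

definition approx_seq :: "nat \<Rightarrow> (nat \<Rightarrow> 'a::{finite,linorder} \<Rightarrow> real) \<Rightarrow> (nat \<Rightarrow> nat \<Rightarrow> 'a list) \<Rightarrow> bool" where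
  "approx_seq n \<mu> \<xi> \<longleftrightarrow>
     (\<forall>i<n. \<forall>N. \<xi> i N \<in> sorted_seqs N) \<and>
     (\<forall>i<n. \<forall>t. (\<lambda>N. seq_type (\<xi> i N) t) \<longlonglongrightarrow> \<mu> i t)"

definition perm_act :: "(nat \<Rightarrow> nat) \<Rightarrow> 'a list \<Rightarrow> 'a list" where
  "perm_act \<sigma> xs = map (\<lambda>j. xs ! inv \<sigma> j) [0..<length xs]"

text \<open>N * kappa_N(h(y_1,...,y_n)) for sequences y_i of length N.\<close>
definition kappa_sum :: "nat \<Rightarrow> nat \<Rightarrow> ((nat \<Rightarrow> 'a) \<Rightarrow> real) \<Rightarrow> (nat \<Rightarrow> 'a list) \<Rightarrow> real" where
  "kappa_sum n N h ys = (\<Sum>j<N. h (restrict (\<lambda>i. ys i ! j) {0..<n}))"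

definition perm_tuples :: "nat \<Rightarrow> nat \<Rightarrow> (nat \<Rightarrow> nat \<Rightarrow> nat) set" where
  "perm_tuples n N = ({0..<n} \<rightarrow>\<^sub>E {\<sigma>. \<sigma> permutes {0..<N}})"

definition mutual_pressure_term :: "nat \<Rightarrow> ((nat \<Rightarrow> 'a) \<Rightarrow> real) \<Rightarrow> (nat \<Rightarrow> nat \<Rightarrow> 'a list) \<Rightarrow> nat \<Rightarrow> real" where
  "mutual_pressure_term n h \<xi> N =
     (1 / real N) * ln ((1 / (fact N) ^ n) *
        (\<Sum>\<sigma>\<in>perm_tuples n N. exp (kappa_sum n N h (\<lambda>i. perm_act (\<sigma> i) (\<xi> i N)))))"

definition mutual_pressure :: "nat \<Rightarrow> ((nat \<Rightarrow> 'a) \<Rightarrow> real) \<Rightarrow> (nat \<Rightarrow> nat \<Rightarrow> 'a list) \<Rightarrow> ereal" where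
  "mutual_pressure n h \<xi> = limsup (\<lambda>N. ereal (mutual_pressure_term n h \<xi> N))"

end

theory Submission
  imports Defs "HOL-Combinatorics.Multiset_Permutations" "HOL-Real_Asymp.Real_Asymp"
begin

(* The average over S_N^n is an average over tuples of rearrangements of the xi_i(N), and the
   number of rearrangements of a sequence is e^{N S(type)} up to a factor polynomial in N
   (Stirling bounds, multinomial coefficients). So the N-th term of P_sym is
   (1/N) ln W_N - sum_i S(type of xi_i(N)) + O(log N / N), W_N being the sum of e^{N kappa_N}
   over tuples of rearrangements (rearrangement_sum, mutual_pressure_term_eq).
   Upper bound: the N columns of a tuple are points of X^n, so W_N <= e^{N P(h)}; tilting h by
   eps 1{x_i = t} gives P_sym <= P(h_eps) - eps mu_i(t) - sum S(mu_j) for every eps. As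
   d/d eps P(h_eps) at 0 is the Gibbs marginal, equality forces (ii).
   Lower bound under (ii): integer counts m_N on X^n with the marginal counts of xi(N) and
   m_N/N -> mu_h exist (round, then correct along the axes); each arrangement of m_N yields a
   distinct tuple of rearrangements, giving P_sym >= S(mu_h) + int h d mu_h - sum S(mu_i), which
   is P(h) - sum S(mu_i). Finally (ii) <-> (iii) is a direct computation. *)

lemma mult_ln_Suc_le: "real k * ln (real k + 1) \<le> real k * ln (real k) + 1"
proof (cases "k = 0")
  case False
  then have "1 + 1 / real k = (real k + 1) / real k" by (simp add: field_simps)
  then have "ln (real k + 1) - ln (real k) = ln (1 + 1 / real k)"
    using False by (simp add: ln_div)
  also have "\<dots> \<le> 1 / real k" by (rule ln_add_one_self_le_self) simp
  finally show ?thesis using False by (simp add: field_simps)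
qed simp

lemma ln_fact_Suc: "ln (fact (Suc k) :: real) = ln (real k + 1) + ln (fact k)"
  by (simp add: ln_mult add.commute)

lemma ln_fact_lower: "real k * ln (real k) - real k \<le> ln (fact k)"
proof (induction k)
  case (Suc k)
  then show ?case using mult_ln_Suc_le[of k] ln_fact_Suc[of k] by (simp add: algebra_simps)
qed simp

lemma ln_fact_upper: "ln (fact k) \<le> (real k + 1) * ln (real k + 1) - real k"
proof (induction k)
  case (Suc k)
  have "1 / (real k + 2) \<le> ln (real k + 2) - ln (real k + 1)"
    using ln_le_minus_one[of "(real k + 1) / (real k + 2)"] by (simp add: ln_div field_simps)
  then have "(real k + 2) * ln (real k + 1) + 1 \<le> (real k + 2) * ln (real k + 2)"
    by (simp add: field_simps)
  then show ?case using Suc ln_fact_Suc[of k] by (simp add: algebra_simps)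
qed simp

lemma Suc_mult_ln_le:
  assumes "k \<le> N"
  shows "(real k + 1) * ln (real k + 1) \<le> real k * ln (real k) + ln (real N + 1) + 1"
proof -
  have "ln (real k + 1) \<le> ln (real N + 1)" using assms by simp
  moreover have "(real k + 1) * ln (real k + 1) = real k * ln (real k + 1) + ln (real k + 1)"
    by (simp add: distrib_right)
  ultimately show ?thesis using mult_ln_Suc_le[of k] by linarith
qed

text \<open>Shannon entropy of a function on an arbitrary finite set (no 0 log 0 convention is
  needed since 0 * ln 0 = 0 in Isabelle).\<close>
definition set_entropy :: "'b set \<Rightarrow> ('b \<Rightarrow> real) \<Rightarrow> real" where
  "set_entropy T p = - (\<Sum>t\<in>T. p t * ln (p t))"

lemma entropy_eq_set_entropy: "entropy \<mu> = set_entropy UNIV \<mu>"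
  unfolding entropy_def set_entropy_def by (intro arg_cong[where f=uminus] sum.cong) simp_all

lemma scaled_entropy_of_counts:
  assumes "(\<Sum>t\<in>T. c t) = N" "N > 0"
  shows "real N * set_entropy T (\<lambda>t. real (c t) / real N)
       = real N * ln (real N) - (\<Sum>t\<in>T. real (c t) * ln (real (c t)))"
proof -
  have "real N * (real (c t) / real N * ln (real (c t) / real N))
      = real (c t) * ln (real (c t)) - real (c t) * ln (real N)" for t
    using assms(2) by (cases "c t = 0") (simp_all add: ln_div algebra_simps)
  then have "real N * set_entropy T (\<lambda>t. real (c t) / real N)
      = - (\<Sum>t\<in>T. real (c t) * ln (real (c t)) - real (c t) * ln (real N))"
    unfolding set_entropy_def by (simp add: sum_distrib_left)
  then show ?thesis
    by (simp add: sum_subtractf sum_distrib_right[symmetric] assms(1)[symmetric])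
qed

lemma ln_multinomial_lower:
  assumes "finite T" "(\<Sum>t\<in>T. c t) = N" "N > 0"
  shows "real N * set_entropy T (\<lambda>t. real (c t) / real N) - real (card T) * (ln (real N + 1) + 1)
         \<le> ln (fact N) - (\<Sum>t\<in>T. ln (fact (c t)))"
proof -
  have "c t \<le> N" if "t \<in> T" for t using member_le_sum[of t T c] assms that by simp
  then have "ln (fact (c t)) \<le> real (c t) * ln (real (c t)) + (ln (real N + 1) + 1) - real (c t)"
    if "t \<in> T" for t
    using ln_fact_upper[of "c t"] Suc_mult_ln_le[of "c t" N] that by fastforce
  then have "(\<Sum>t\<in>T. ln (fact (c t)))
      \<le> (\<Sum>t\<in>T. real (c t) * ln (real (c t)) + (ln (real N + 1) + 1) - real (c t))"
    by (rule sum_mono)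
  also have "\<dots> = (\<Sum>t\<in>T. real (c t) * ln (real (c t))) + real (card T) * (ln (real N + 1) + 1) - real N"
    by (simp add: sum.distrib sum_subtractf assms(2)[symmetric])
  finally show ?thesis
    using ln_fact_lower[of N] scaled_entropy_of_counts[OF assms(2,3)] by linarith
qed

lemma ln_multinomial_upper:
  assumes "(\<Sum>t\<in>T. c t) = N" "N > 0"
  shows "ln (fact N) - (\<Sum>t\<in>T. ln (fact (c t)))
         \<le> real N * set_entropy T (\<lambda>t. real (c t) / real N) + ln (real N + 1) + 1"
proof -
  have "(\<Sum>t\<in>T. real (c t) * ln (real (c t)) - real (c t)) \<le> (\<Sum>t\<in>T. ln (fact (c t)))"
    by (rule sum_mono) (rule ln_fact_lower)
  then have "(\<Sum>t\<in>T. real (c t) * ln (real (c t))) - real N \<le> (\<Sum>t\<in>T. ln (fact (c t)))"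
    by (simp add: sum_subtractf assms(1)[symmetric])
  then show ?thesis
    using ln_fact_upper[of N] Suc_mult_ln_le[of N N] scaled_entropy_of_counts[OF assms] by linarith
qed

lemma continuous_on_mult_ln: "continuous_on {0..} (\<lambda>x::real. x * ln x)"
proof (rule continuous_on_eq_continuous_within[THEN iffD2], rule ballI)
  fix x :: real assume x: "x \<in> {0..}"
  show "continuous (at x within {0..}) (\<lambda>x. x * ln x)"
  proof (cases "x = 0")
    case True
    have "((\<lambda>x::real. x * ln x) \<longlongrightarrow> 0) (at_right 0)" by real_asymp
    then show ?thesis using True by (simp add: continuous_within at_within_Ici_at_right)
  next
    case False
    then have "isCont (\<lambda>x. x * ln x) x" using x by (intro isCont_mult isCont_ln) auto
    then show ?thesis by (rule continuous_at_imp_continuous_at_within)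
  qed
qed

lemma set_entropy_tendsto:
  assumes "finite T" "\<And>t. t \<in> T \<Longrightarrow> ((\<lambda>N. p N t) \<longlongrightarrow> q t) F"
    and "\<And>t. t \<in> T \<Longrightarrow> \<forall>\<^sub>F N in F. p N t \<ge> 0"
  shows "((\<lambda>N. set_entropy T (p N)) \<longlongrightarrow> set_entropy T q) F"
proof (cases "F = bot")
  case False
  have "((\<lambda>N. p N t * ln (p N t)) \<longlongrightarrow> q t * ln (q t)) F" if t: "t \<in> T" for t
  proof -
    have "q t \<ge> 0" using tendsto_lowerbound[OF assms(2,3)[OF t] False] .
    then show ?thesis
      using continuous_on_tendsto_compose[OF continuous_on_mult_ln assms(2)[OF t]] assms(3)[OF t]
      by (simp add: o_def)
  qed
  then show ?thesis unfolding set_entropy_def by (intro tendsto_minus tendsto_sum assms(1))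
qed simp

lemma ln_error_over_N_tendsto: "(\<lambda>N::nat. (ln (real N + 1) + 1) / real N) \<longlonglongrightarrow> 0"
  by real_asymp

lemma floor_over_N_tendsto: "(\<lambda>N. real_of_int \<lfloor>real N * a\<rfloor> / real N) \<longlonglongrightarrow> a"
proof (rule tendsto_sandwich[where f = "\<lambda>N. a - 1 / real N" and h = "\<lambda>N. a"])
  show "\<forall>\<^sub>F N in sequentially. a - 1 / real N \<le> real_of_int \<lfloor>real N * a\<rfloor> / real N"
    using eventually_gt_at_top[of 0]
  proof eventually_elim
    case (elim N)
    have "(real N * a - 1) / real N \<le> real_of_int \<lfloor>real N * a\<rfloor> / real N"
      using elim by (intro divide_right_mono) linarith+
    then show ?case using elim by (simp add: field_simps)
  qed
  show "\<forall>\<^sub>F N in sequentially. real_of_int \<lfloor>real N * a\<rfloor> / real N \<le> a"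
    using eventually_gt_at_top[of 0]
  proof eventually_elim
    case (elim N)
    have "real_of_int \<lfloor>real N * a\<rfloor> \<le> real N * a" by linarith
    then show ?case using elim by (simp add: field_simps)
  qed
  show "(\<lambda>N. a - 1 / real N) \<longlonglongrightarrow> a" by real_asymp
qed (rule tendsto_const)

text \<open>The action of S_N on sequences of length N (as defined in perm_act) is a left group
  action; its orbit through xs is the set of rearrangements of xs and all its fibres have the
  same size. This turns the average over S_N^n in the mutual pressure into an average over
  rearrangements.\<close>
lemma perm_act_eq_permute_list: "perm_act \<sigma> xs = permute_list (inv \<sigma>) xs"
  by (simp add: perm_act_def permute_list_def)

lemma perm_act_id: "perm_act id xs = xs"
  by (simp add: perm_act_eq_permute_list)

lemma perm_act_compose:
  assumes \<sigma>: "\<sigma> permutes {0..<length xs}" and \<tau>: "\<tau> permutes {0..<length xs}"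
  shows "perm_act (\<sigma> \<circ> \<tau>) xs = perm_act \<sigma> (perm_act \<tau> xs)"
proof -
  have inv_comp: "inv (\<sigma> \<circ> \<tau>) = inv \<tau> \<circ> inv \<sigma>"
    using o_inv_distrib[OF permutes_bij[OF \<sigma>] permutes_bij[OF \<tau>]] .
  have "inv \<sigma> j < length xs" if "j < length xs" for j
    using permutes_in_image[OF permutes_inv[OF \<sigma>], of j] that by simp
  then have nth: "perm_act \<tau> xs ! inv \<sigma> j = xs ! inv (\<sigma> \<circ> \<tau>) j" if "j < length xs" for j
    using that by (simp add: perm_act_def inv_comp)
  have len: "length (perm_act \<tau> xs) = length xs" by (simp add: perm_act_def)
  show ?thesis
    unfolding perm_act_def[of \<sigma> "perm_act \<tau> xs"] perm_act_def[of "\<sigma> \<circ> \<tau>" xs] len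
    by (rule map_cong) (simp_all add: nth)
qed

lemma perm_act_image:
  assumes "length xs = N"
  shows "(\<lambda>\<sigma>. perm_act \<sigma> xs) ` {\<sigma>. \<sigma> permutes {0..<N}} = permutations_of_multiset (mset xs)"
proof
  show "(\<lambda>\<sigma>. perm_act \<sigma> xs) ` {\<sigma>. \<sigma> permutes {0..<N}} \<subseteq> permutations_of_multiset (mset xs)"
    using assms by (auto simp: perm_act_eq_permute_list permutations_of_multiset_def atLeast0LessThan
        intro!: mset_permute_list permutes_inv)
next
  show "permutations_of_multiset (mset xs) \<subseteq> (\<lambda>\<sigma>. perm_act \<sigma> xs) ` {\<sigma>. \<sigma> permutes {0..<N}}"
  proof
    fix ys assume "ys \<in> permutations_of_multiset (mset xs)"
    then have "mset ys = mset xs" by (simp add: permutations_of_multiset_def)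
    then obtain p where p: "p permutes {..<length xs}" "permute_list p xs = ys"
      by (rule mset_eq_permutation)
    then have "inv p permutes {0..<N}" "perm_act (inv p) xs = ys"
      using assms by (simp_all add: atLeast0LessThan permutes_inv perm_act_eq_permute_list
          inv_inv_eq permutes_bij)
    then show "ys \<in> (\<lambda>\<sigma>. perm_act \<sigma> xs) ` {\<sigma>. \<sigma> permutes {0..<N}}" by blast
  qed
qed

text \<open>Every fibre is a left coset of the stabiliser of xs.\<close>
lemma perm_act_fibre_card:
  assumes len: "length xs = N" and ys: "ys \<in> permutations_of_multiset (mset xs)"
  shows "card {\<sigma>. \<sigma> permutes {0..<N} \<and> perm_act \<sigma> xs = ys}
       = card {\<sigma>. \<sigma> permutes {0..<N} \<and> perm_act \<sigma> xs = xs}"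
proof -
  have "ys \<in> (\<lambda>\<sigma>. perm_act \<sigma> xs) ` {\<sigma>. \<sigma> permutes {0..<N}}"
    using ys unfolding perm_act_image[OF len] .
  then obtain \<rho> where \<rho>: "\<rho> permutes {0..<N}" "perm_act \<rho> xs = ys" by auto
  have \<rho>_inv: "inv \<rho> permutes {0..<N}" using \<rho>(1) by (rule permutes_inv)
  have "perm_act (inv \<rho> \<circ> \<rho>) xs = perm_act (inv \<rho>) ys"
    using perm_act_compose[of "inv \<rho>" xs \<rho>] \<rho> \<rho>_inv len by simp
  then have \<rho>_inv_ys: "perm_act (inv \<rho>) ys = xs"
    by (simp only: permutes_inv_o(2)[OF \<rho>(1)] perm_act_id)
  have comp: "perm_act (\<alpha> \<circ> \<beta>) xs = perm_act \<alpha> (perm_act \<beta> xs)"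
    if "\<alpha> permutes {0..<N}" "\<beta> permutes {0..<N}" for \<alpha> \<beta>
    using perm_act_compose[of \<alpha> xs \<beta>] that len by simp
  have "bij_betw ((\<circ>) \<rho>) {\<sigma>. \<sigma> permutes {0..<N} \<and> perm_act \<sigma> xs = xs}
      {\<sigma>. \<sigma> permutes {0..<N} \<and> perm_act \<sigma> xs = ys}"
  proof (rule bij_betw_byWitness[where f' = "(\<circ>) (inv \<rho>)"])
    show "\<forall>\<sigma>\<in>{\<sigma>. \<sigma> permutes {0..<N} \<and> perm_act \<sigma> xs = xs}. inv \<rho> \<circ> (\<rho> \<circ> \<sigma>) = \<sigma>"
      by (simp add: o_assoc permutes_inv_o(2)[OF \<rho>(1)])
    show "\<forall>\<sigma>\<in>{\<sigma>. \<sigma> permutes {0..<N} \<and> perm_act \<sigma> xs = ys}. \<rho> \<circ> (inv \<rho> \<circ> \<sigma>) = \<sigma>"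
      by (simp add: o_assoc permutes_inv_o(1)[OF \<rho>(1)])
    show "(\<circ>) \<rho> ` {\<sigma>. \<sigma> permutes {0..<N} \<and> perm_act \<sigma> xs = xs}
        \<subseteq> {\<sigma>. \<sigma> permutes {0..<N} \<and> perm_act \<sigma> xs = ys}"
    proof (rule image_subsetI)
      fix \<sigma> assume "\<sigma> \<in> {\<sigma>. \<sigma> permutes {0..<N} \<and> perm_act \<sigma> xs = xs}"
      then have \<sigma>: "\<sigma> permutes {0..<N}" "perm_act \<sigma> xs = xs" by simp_all
      show "\<rho> \<circ> \<sigma> \<in> {\<sigma>. \<sigma> permutes {0..<N} \<and> perm_act \<sigma> xs = ys}"
        using permutes_compose[OF \<sigma>(1) \<rho>(1)] comp[OF \<rho>(1) \<sigma>(1)] \<sigma>(2) \<rho>(2) by simp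
    qed
    show "(\<circ>) (inv \<rho>) ` {\<sigma>. \<sigma> permutes {0..<N} \<and> perm_act \<sigma> xs = ys}
        \<subseteq> {\<sigma>. \<sigma> permutes {0..<N} \<and> perm_act \<sigma> xs = xs}"
    proof (rule image_subsetI)
      fix \<sigma> assume "\<sigma> \<in> {\<sigma>. \<sigma> permutes {0..<N} \<and> perm_act \<sigma> xs = ys}"
      then have \<sigma>: "\<sigma> permutes {0..<N}" "perm_act \<sigma> xs = ys" by simp_all
      show "inv \<rho> \<circ> \<sigma> \<in> {\<sigma>. \<sigma> permutes {0..<N} \<and> perm_act \<sigma> xs = xs}"
        using permutes_compose[OF \<sigma>(1) \<rho>_inv] comp[OF \<rho>_inv \<sigma>(1)] \<sigma>(2) \<rho>_inv_ys by simp
    qed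
  qed
  then show ?thesis by (simp add: bij_betw_same_card)
qed

lemma perm_act_fibre_card_eq:
  assumes len: "length xs = N" and ys: "ys \<in> permutations_of_multiset (mset xs)"
  shows "real (card {\<sigma>. \<sigma> permutes {0..<N} \<and> perm_act \<sigma> xs = ys})
       = fact N / real (card (permutations_of_multiset (mset xs)))"
proof -
  define P where "P = {\<sigma>. \<sigma> permutes {0..<N}}"
  define A where "A = permutations_of_multiset (mset xs)"
  define c where "c = card {\<sigma>. \<sigma> permutes {0..<N} \<and> perm_act \<sigma> xs = xs}"
  have "finite P" unfolding P_def by (rule finite_permutations) simp
  then have "card P = (\<Sum>y\<in>(\<lambda>\<sigma>. perm_act \<sigma> xs) ` P. card {\<sigma>\<in>P. perm_act \<sigma> xs = y})"
    using sum.image_gen[of P "\<lambda>_. 1::nat" "\<lambda>\<sigma>. perm_act \<sigma> xs"] by simp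
  also have "\<dots> = (\<Sum>y\<in>A. c)"
    unfolding P_def A_def c_def perm_act_image[OF len]
    using perm_act_fibre_card[OF len] by (intro sum.cong) simp_all
  finally have "card A * c = fact N"
    using card_permutations[of "{0..<N}"] by (simp add: P_def)
  then have "real (card A) * real c = fact N" by (metis of_nat_fact of_nat_mult)
  moreover have "card A > 0" unfolding A_def by (simp add: card_gt_0_iff)
  ultimately show ?thesis
    using perm_act_fibre_card[OF assms] by (simp add: A_def c_def field_simps)
qed

lemma sum_PiE_constant_fibres:
  fixes F :: "(nat \<Rightarrow> 'b) \<Rightarrow> real"
  assumes finI: "finite I" and finS: "\<And>i. i \<in> I \<Longrightarrow> finite (S i)"
    and img: "\<And>i. i \<in> I \<Longrightarrow> g i ` S i = B i"
    and fib: "\<And>i y. i \<in> I \<Longrightarrow> y \<in> B i \<Longrightarrow> real (card {s\<in>S i. g i s = y}) = c i"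
    and F_cong: "\<And>y y'. (\<And>i. i \<in> I \<Longrightarrow> y i = y' i) \<Longrightarrow> F y = F y'"
  shows "(\<Sum>\<sigma>\<in>PiE I S. F (\<lambda>i. g i (\<sigma> i))) = (\<Prod>i\<in>I. c i) * (\<Sum>y\<in>PiE I B. F y)"
proof -
  define G where "G = (\<lambda>\<sigma>. restrict (\<lambda>i. g i (\<sigma> i)) I)"
  have G_image: "G ` PiE I S = PiE I B"
  proof
    show "G ` PiE I S \<subseteq> PiE I B" using img by (force simp: G_def PiE_iff)
    show "PiE I B \<subseteq> G ` PiE I S"
    proof
      fix y assume y: "y \<in> PiE I B"
      define \<sigma> where "\<sigma> = restrict (\<lambda>i. SOME s. s \<in> S i \<and> g i s = y i) I"
      have ex: "\<exists>s. s \<in> S i \<and> g i s = y i" if "i \<in> I" for i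
        using y img[OF that] that by (force simp: PiE_iff)
      have "\<sigma> \<in> PiE I S" "G \<sigma> = y" using someI_ex[OF ex] y
        by (auto simp: \<sigma>_def G_def fun_eq_iff PiE_iff extensional_def)
      then show "y \<in> G ` PiE I S" by blast
    qed
  qed
  have fibre: "(\<Sum>\<sigma>\<in>{\<sigma>\<in>PiE I S. G \<sigma> = y}. F (G \<sigma>)) = (\<Prod>i\<in>I. c i) * F y"
    if y: "y \<in> PiE I B" for y
  proof -
    have set: "{\<sigma>\<in>PiE I S. G \<sigma> = y} = PiE I (\<lambda>i. {s\<in>S i. g i s = y i})"
      using y by (auto simp: G_def PiE_iff fun_eq_iff extensional_def)
    have "(\<Sum>\<sigma>\<in>{\<sigma>\<in>PiE I S. G \<sigma> = y}. F (G \<sigma>)) = (\<Sum>\<sigma>\<in>{\<sigma>\<in>PiE I S. G \<sigma> = y}. F y)"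
      by (intro sum.cong) auto
    also have "\<dots> = real (card (PiE I (\<lambda>i. {s\<in>S i. g i s = y i}))) * F y"
      by (simp only: set sum_constant)
    also have "\<dots> = (\<Prod>i\<in>I. c i) * F y"
      using y finI by (simp add: card_PiE fib PiE_iff)
    finally show ?thesis .
  qed
  have "(\<Sum>\<sigma>\<in>PiE I S. F (\<lambda>i. g i (\<sigma> i))) = (\<Sum>\<sigma>\<in>PiE I S. F (G \<sigma>))"
    by (intro sum.cong refl F_cong) (simp add: G_def)
  also have "\<dots> = (\<Sum>y\<in>G ` PiE I S. \<Sum>\<sigma>\<in>{\<sigma>\<in>PiE I S. G \<sigma> = y}. F (G \<sigma>))"
    using finI finS by (intro sum.image_gen) (simp add: finite_PiE)
  also have "\<dots> = (\<Sum>y\<in>PiE I B. (\<Prod>i\<in>I. c i) * F y)"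
    unfolding G_image by (rule sum.cong[OF refl fibre])
  finally show ?thesis by (simp add: sum_distrib_left)
qed

lemma ln_card_permutations_of_multiset:
  assumes "finite C" "set_mset M \<subseteq> C"
  shows "ln (real (card (permutations_of_multiset M)))
       = ln (fact (size M)) - (\<Sum>x\<in>C. ln (fact (count M x)))"
proof -
  define k where "k = card (permutations_of_multiset M)"
  have "(\<Prod>x\<in>set_mset M. fact (count M x)) = (\<Prod>x\<in>C. fact (count M x) :: nat)"
    using assms by (intro prod.mono_neutral_left) (auto simp: not_in_iff)
  then have "real (k * (\<Prod>x\<in>C. fact (count M x))) = real (fact (size M))"
    using card_permutations_of_multiset_aux[of M] by (simp only: k_def)
  then have "fact (size M) = real k * (\<Prod>x\<in>C. fact (count M x))"
    by (simp only: of_nat_mult of_nat_prod of_nat_fact)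
  moreover have "real k > 0" by (simp add: k_def card_gt_0_iff)
  moreover have "(\<Prod>x\<in>C. fact (count M x) :: real) > 0" by (rule prod_pos) simp
  ultimately have "ln (fact (size M)) = ln (real k) + ln (\<Prod>x\<in>C. fact (count M x) :: real)"
    by (metis ln_mult_pos)
  moreover have "ln (\<Prod>x\<in>C. fact (count M x) :: real) = (\<Sum>x\<in>C. ln (fact (count M x)))"
    using assms(1) by (intro ln_prod) auto
  ultimately show ?thesis by (simp add: k_def)
qed

definition rearrangement_sum :: "nat \<Rightarrow> nat \<Rightarrow> ((nat \<Rightarrow> 'a) \<Rightarrow> real) \<Rightarrow> (nat \<Rightarrow> 'a list) \<Rightarrow> real"
  where "rearrangement_sum n N h xs =
    (\<Sum>ys\<in>PiE {0..<n} (\<lambda>i. permutations_of_multiset (mset (xs i))). exp (kappa_sum n N h ys))"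

text \<open>There is at least one tuple of rearrangements, so the sum is positive.\<close>
lemma rearrangement_sum_pos: "rearrangement_sum n N h xs > 0"
  unfolding rearrangement_sum_def by (rule sum_pos) (auto simp: finite_PiE PiE_eq_empty_iff)

text \<open>Reduction of the average over S_N^n: each rearrangement of xs_i is hit by exactly
  N! / |rearrangements of xs_i| permutations.\<close>
lemma mutual_pressure_term_eq:
  assumes len: "\<And>i. i < n \<Longrightarrow> length (\<xi> i N) = N" and N: "N > 0"
  shows "mutual_pressure_term n h \<xi> N
       = (ln (rearrangement_sum n N h (\<lambda>i. \<xi> i N))
          - (\<Sum>i<n. ln (real (card (permutations_of_multiset (mset (\<xi> i N))))))) / real N"
proof -
  define A where "A = (\<lambda>i. permutations_of_multiset (mset (\<xi> i N)))"
  define W where "W = rearrangement_sum n N h (\<lambda>i. \<xi> i N)"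
  have card_A: "real (card (A i)) > 0" for i by (simp add: A_def card_gt_0_iff)
  have "(\<Sum>\<sigma>\<in>perm_tuples n N. exp (kappa_sum n N h (\<lambda>i. perm_act (\<sigma> i) (\<xi> i N))))
      = (\<Prod>i\<in>{0..<n}. fact N / real (card (A i))) * W"
    unfolding perm_tuples_def W_def rearrangement_sum_def A_def
  proof (rule sum_PiE_constant_fibres)
    show "finite {\<sigma>. \<sigma> permutes {0..<N}}" by (rule finite_permutations) simp
    fix i assume "i \<in> {0..<n}"
    then have len_i: "length (\<xi> i N) = N" using len by simp
    show "(\<lambda>\<sigma>. perm_act \<sigma> (\<xi> i N)) ` {\<sigma>. \<sigma> permutes {0..<N}} = permutations_of_multiset (mset (\<xi> i N))"
      by (rule perm_act_image[OF len_i])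
    fix y assume "y \<in> permutations_of_multiset (mset (\<xi> i N))"
    then show "real (card {s \<in> {\<sigma>. \<sigma> permutes {0..<N}}. perm_act s (\<xi> i N) = y})
        = fact N / real (card (permutations_of_multiset (mset (\<xi> i N))))"
      using perm_act_fibre_card_eq[OF len_i] by simp
  next
    fix y y' :: "nat \<Rightarrow> 'a list" assume "\<And>i. i \<in> {0..<n} \<Longrightarrow> y i = y' i"
    then have "restrict (\<lambda>i. y i ! j) {0..<n} = restrict (\<lambda>i. y' i ! j) {0..<n}" for j
      by (intro restrict_ext) simp
    then show "exp (kappa_sum n N h y) = exp (kappa_sum n N h y')" by (simp add: kappa_sum_def)
  qed simp
  also have "\<dots> = (fact N) ^ n / (\<Prod>i\<in>{0..<n}. real (card (A i))) * W"
    by (simp add: prod_dividef)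
  finally have "1 / fact N ^ n * (\<Sum>\<sigma>\<in>perm_tuples n N. exp (kappa_sum n N h (\<lambda>i. perm_act (\<sigma> i) (\<xi> i N))))
      = W / (\<Prod>i\<in>{0..<n}. real (card (A i)))"
    by simp
  moreover have "ln (W / (\<Prod>i\<in>{0..<n}. real (card (A i)))) = ln W - (\<Sum>i<n. ln (real (card (A i))))"
    using card_A rearrangement_sum_pos[of n N h "\<lambda>i. \<xi> i N", folded W_def]
    by (simp add: ln_div ln_prod prod_pos atLeast0LessThan)
  ultimately show ?thesis by (simp add: mutual_pressure_term_def A_def W_def)
qed

lemma ln_card_rearrangements_bounds:
  fixes xs :: "'a::finite list"
  assumes len: "length xs = N" and N: "N > 0"
  shows "real N * entropy (seq_type xs) - real CARD('a) * (ln (real N + 1) + 1)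
           \<le> ln (real (card (permutations_of_multiset (mset xs))))"
    and "ln (real (card (permutations_of_multiset (mset xs))))
           \<le> real N * entropy (seq_type xs) + ln (real N + 1) + 1"
proof -
  have counts: "(\<Sum>t\<in>UNIV. count_list xs t) = N" using len by (simp add: sum_count_set)
  have entropy: "entropy (seq_type xs) = set_entropy UNIV (\<lambda>t. real (count_list xs t) / real N)"
    by (simp add: entropy_eq_set_entropy seq_type_def[abs_def] len)
  have card: "ln (real (card (permutations_of_multiset (mset xs))))
      = ln (fact N) - (\<Sum>t\<in>UNIV. ln (fact (count_list xs t)))"
    using ln_card_permutations_of_multiset[of UNIV "mset xs"] len by (simp add: count_mset)
  show "real N * entropy (seq_type xs) - real CARD('a) * (ln (real N + 1) + 1)
           \<le> ln (real (card (permutations_of_multiset (mset xs))))"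
    using ln_multinomial_lower[OF _ counts N] unfolding card entropy by simp
  show "ln (real (card (permutations_of_multiset (mset xs))))
           \<le> real N * entropy (seq_type xs) + ln (real N + 1) + 1"
    using ln_multinomial_upper[OF counts N] unfolding card entropy by simp
qed

definition column :: "nat \<Rightarrow> (nat \<Rightarrow> 'a list) \<Rightarrow> nat \<Rightarrow> nat \<Rightarrow> 'a" where
  "column n ys j = restrict (\<lambda>i. ys i ! j) {0..<n}"

lemma kappa_sum_columns: "kappa_sum n N h ys = (\<Sum>j<N. h (column n ys j))"
  by (simp add: kappa_sum_def column_def)

lemma finite_cube: "finite (cube n :: (nat \<Rightarrow> 'a::finite) set)"
  by (simp add: cube_def finite_PiE)

lemma partition_function_pos:
  fixes h :: "(nat \<Rightarrow> 'a::finite) \<Rightarrow> real"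
  shows "(\<Sum>x\<in>cube n. exp (h x)) > 0"
  using finite_cube[of n] by (intro sum_pos) (auto simp: cube_def PiE_eq_empty_iff)

lemma inj_on_columns:
  assumes len: "\<And>ys i. ys \<in> D \<Longrightarrow> i < n \<Longrightarrow> length (ys i) = N"
    and ext: "D \<subseteq> extensional {0..<n}"
  shows "inj_on (\<lambda>ys. restrict (column n ys) {0..<N}) D"
proof (rule inj_onI)
  fix ys ys' assume ys: "ys \<in> D" "ys' \<in> D"
    and eq: "restrict (column n ys) {0..<N} = restrict (column n ys') {0..<N}"
  show "ys = ys'"
  proof
    fix i show "ys i = ys' i"
    proof (cases "i < n")
      case True
      have "column n ys j i = column n ys' j i" if "j < N" for j
        using fun_cong[OF eq, of j] that by simp
      then have "ys i ! j = ys' i ! j" if "j < N" for j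
        using that True by (simp add: column_def)
      then show ?thesis using len[OF ys(1) True] len[OF ys(2) True] by (simp add: nth_equalityI)
    next
      case False
      moreover have "ys \<in> extensional {0..<n}" "ys' \<in> extensional {0..<n}" using ys ext by auto
      ultimately show ?thesis by (simp add: extensional_def)
    qed
  qed
qed

text \<open>The columns of a tuple of sequences of length N range over (X^n)^N; hence summing
  e^{N \<kappa>_N} over any set of such tuples gives at most (\<Sum>_x e^{h(x)})^N = e^{N P(h)}.\<close>
lemma sum_exp_kappa_le:
  fixes h :: "(nat \<Rightarrow> 'a::finite) \<Rightarrow> real"
  assumes len: "\<And>ys i. ys \<in> D \<Longrightarrow> i < n \<Longrightarrow> length (ys i) = N"
    and ext: "D \<subseteq> extensional {0..<n}"
  shows "(\<Sum>ys\<in>D. exp (kappa_sum n N h ys)) \<le> exp (real N * pressure (cube n) h)"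
proof -
  define cols where "cols = (\<lambda>ys :: nat \<Rightarrow> 'a list. restrict (column n ys) {0..<N})"
  have "inj_on cols D" unfolding cols_def using len ext by (intro inj_on_columns) auto
  then have "(\<Sum>ys\<in>D. exp (kappa_sum n N h ys)) = (\<Sum>z\<in>cols ` D. \<Prod>j\<in>{0..<N}. exp (h (z j)))"
    by (simp add: sum.reindex kappa_sum_columns exp_sum cols_def atLeast0LessThan)
  also have "\<dots> \<le> (\<Sum>z\<in>PiE {0..<N} (\<lambda>_. cube n). \<Prod>j\<in>{0..<N}. exp (h (z j)))"
  proof (rule sum_mono2)
    show "finite (PiE {0..<N} (\<lambda>_. cube n :: (nat \<Rightarrow> 'a) set))" by (simp add: finite_PiE finite_cube)
    show "cols ` D \<subseteq> PiE {0..<N} (\<lambda>_. cube n)" by (auto simp: cols_def column_def cube_def)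
  qed (simp add: prod_nonneg)
  also have "\<dots> = (\<Sum>x\<in>cube n. exp (h x)) ^ N"
    using prod_sum_PiE[where f = "\<lambda>_ x. exp (h x)" and A = "{0..<N}" and B = "\<lambda>_. cube n"]
    by (simp add: finite_cube)
  also have "\<dots> = exp (real N * pressure (cube n) h)"
    using partition_function_pos[of h n] by (simp add: pressure_def exp_of_nat_mult)
  finally show ?thesis .
qed

definition tilted :: "((nat \<Rightarrow> 'a) \<Rightarrow> real) \<Rightarrow> nat \<Rightarrow> 'a \<Rightarrow> real \<Rightarrow> (nat \<Rightarrow> 'a) \<Rightarrow> real" where
  "tilted h i t \<epsilon> x = h x + \<epsilon> * (if x i = t then 1 else 0)"

lemma tilted_zero [simp]: "tilted h i t 0 = h"
  by (simp add: tilted_def fun_eq_iff)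

lemma count_list_as_sum:
  assumes "length xs = N"
  shows "real (count_list xs t) = (\<Sum>j<N. if xs ! j = t then 1 else 0)"
proof -
  have "count_list xs t = card {j. j < N \<and> xs ! j = t}"
    using assms by (simp add: count_list_eq_length_filter length_filter_conv_card eq_commute)
  then show ?thesis by (simp add: sum.If_cases Int_def)
qed

lemma kappa_sum_tilted:
  assumes "i < n" "length (ys i) = N"
  shows "kappa_sum n N (tilted h i t \<epsilon>) ys = kappa_sum n N h ys + \<epsilon> * real (count_list (ys i) t)"
  using assms
  by (simp add: kappa_sum_columns tilted_def column_def sum.distrib sum_distrib_left
      count_list_as_sum[OF assms(2)])

text \<open>Upper bound for the rearrangement sum: all rearrangements of xs_i contain t exactly
  count(xs_i, t) times, so tilting h changes every term by the same factor. The case \<epsilon> = 0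
  (allowed also when n = 0) is the plain bound by e^{N P(h)}.\<close>
lemma rearrangement_sum_le_tilted:
  fixes h :: "(nat \<Rightarrow> 'a::finite) \<Rightarrow> real"
  assumes len: "\<And>i. i < n \<Longrightarrow> length (xs i) = N" and i_or_\<epsilon>: "i < n \<or> \<epsilon> = 0"
  shows "rearrangement_sum n N h xs
       \<le> exp (real N * pressure (cube n) (tilted h i t \<epsilon>) - \<epsilon> * real (count_list (xs i) t))"
proof -
  define D where "D = PiE {0..<n} (\<lambda>i. permutations_of_multiset (mset (xs i)))"
  have len_D: "length (ys i) = N" if "ys \<in> D" "i < n" for ys i
    using that len[OF that(2)] length_finite_permutations_of_multiset
    by (fastforce simp: D_def PiE_iff)
  have tilt: "kappa_sum n N (tilted h i t \<epsilon>) ys = kappa_sum n N h ys + \<epsilon> * real (count_list (xs i) t)"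
    if ys: "ys \<in> D" for ys
  proof (cases "\<epsilon> = 0")
    case True
    then show ?thesis by simp
  next
    case False
    then have "i < n" using i_or_\<epsilon> by simp
    moreover have "count_list (ys i) t = count_list (xs i) t"
      using ys \<open>i < n\<close>
      by (auto simp: D_def PiE_iff permutations_of_multiset_def count_mset[symmetric])
    ultimately show ?thesis using kappa_sum_tilted[of i n ys N h t \<epsilon>] len_D[OF ys \<open>i < n\<close>] by simp
  qed
  have "rearrangement_sum n N h xs
      = (\<Sum>ys\<in>D. exp (kappa_sum n N (tilted h i t \<epsilon>) ys)) * exp (- \<epsilon> * real (count_list (xs i) t))"
    by (simp add: rearrangement_sum_def D_def[symmetric] sum_distrib_right tilt exp_add[symmetric])
  also have "\<dots> \<le> exp (real N * pressure (cube n) (tilted h i t \<epsilon>))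
      * exp (- \<epsilon> * real (count_list (xs i) t))"
    using len_D by (intro mult_right_mono sum_exp_kappa_le) (auto simp: D_def PiE_iff)
  finally show ?thesis by (simp add: exp_diff exp_minus field_simps)
qed

lemma approx_seq_length: "approx_seq n \<mu> \<xi> \<Longrightarrow> i < n \<Longrightarrow> length (\<xi> i N) = N"
  by (simp add: approx_seq_def sorted_seqs_def)

lemma approx_seq_tendsto: "approx_seq n \<mu> \<xi> \<Longrightarrow> i < n \<Longrightarrow> (\<lambda>N. seq_type (\<xi> i N) t) \<longlonglongrightarrow> \<mu> i t"
  by (simp add: approx_seq_def)

lemma seq_type_nonneg: "seq_type xs t \<ge> 0"
  by (simp add: seq_type_def)

lemma entropy_seq_type_tendsto:
  assumes "approx_seq n \<mu> \<xi>" "i < n"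
  shows "(\<lambda>N. entropy (seq_type (\<xi> i N))) \<longlonglongrightarrow> entropy (\<mu> i)"
  unfolding entropy_eq_set_entropy
  by (rule set_entropy_tendsto) (simp_all add: approx_seq_tendsto[OF assms] seq_type_nonneg)

lemma mutual_pressure_term_le:
  fixes h :: "(nat \<Rightarrow> 'a::finite) \<Rightarrow> real"
  assumes len: "\<And>j. j < n \<Longrightarrow> length (\<xi> j N) = N" and N: "N > 0" and i_or_\<epsilon>: "i < n \<or> \<epsilon> = 0"
  shows "mutual_pressure_term n h \<xi> N
       \<le> pressure (cube n) (tilted h i t \<epsilon>) - \<epsilon> * seq_type (\<xi> i N) t
         - (\<Sum>j<n. entropy (seq_type (\<xi> j N))) + real n * CARD('a) * ((ln (real N + 1) + 1) / real N)"
proof -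
  define L where "L = ln (real N + 1) + 1"
  define W where "W = rearrangement_sum n N h (\<lambda>j. \<xi> j N)"
  have "W \<le> exp (real N * pressure (cube n) (tilted h i t \<epsilon>) - \<epsilon> * real (count_list (\<xi> i N) t))"
    unfolding W_def using len i_or_\<epsilon> by (rule rearrangement_sum_le_tilted)
  then have ln_W: "ln W \<le> real N * pressure (cube n) (tilted h i t \<epsilon>) - \<epsilon> * real (count_list (\<xi> i N) t)"
    using rearrangement_sum_pos[of n N h "\<lambda>j. \<xi> j N", folded W_def]
    by (metis exp_gt_zero ln_exp ln_le_cancel_iff)
  define LA where "LA = (\<Sum>j<n. ln (real (card (permutations_of_multiset (mset (\<xi> j N))))))"
  define S where "S = (\<Sum>j<n. entropy (seq_type (\<xi> j N)))"
  have count: "\<epsilon> * real (count_list (\<xi> i N) t) = real N * (\<epsilon> * seq_type (\<xi> i N) t)"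
    using i_or_\<epsilon> N len[of i] by (auto simp: seq_type_def)
  have "(\<Sum>j<n. real N * entropy (seq_type (\<xi> j N)) - CARD('a) * L) \<le> LA"
    unfolding LA_def using ln_card_rearrangements_bounds(1)[OF len N]
    by (intro sum_mono) (simp add: L_def)
  then have "real N * S - real n * CARD('a) * L \<le> LA"
    by (simp add: S_def sum_subtractf sum_distrib_left)
  then have "(ln W - LA) / real N
      \<le> (real N * (pressure (cube n) (tilted h i t \<epsilon>) - \<epsilon> * seq_type (\<xi> i N) t - S)
         + real n * CARD('a) * L) / real N"
    using ln_W count by (intro divide_right_mono) (simp_all add: algebra_simps)
  also have "\<dots> = pressure (cube n) (tilted h i t \<epsilon>) - \<epsilon> * seq_type (\<xi> i N) t - S
      + real n * CARD('a) * (L / real N)"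
    using N by (simp add: field_simps)
  finally show ?thesis
    by (simp add: mutual_pressure_term_eq[where \<xi> = \<xi> and n = n and N = N, OF len N] W_def LA_def
        S_def L_def)
qed

lemma mutual_pressure_le_tilted:
  fixes h :: "(nat \<Rightarrow> 'a::{finite,linorder}) \<Rightarrow> real"
  assumes approx: "approx_seq n \<mu> \<xi>" and i_or_\<epsilon>: "i < n \<or> \<epsilon> = 0"
  shows "mutual_pressure n h \<xi>
       \<le> ereal (pressure (cube n) (tilted h i t \<epsilon>) - \<epsilon> * \<mu> i t - (\<Sum>j<n. entropy (\<mu> j)))"
proof -
  define bound where "bound = (\<lambda>N. pressure (cube n) (tilted h i t \<epsilon>) - \<epsilon> * seq_type (\<xi> i N) t
      - (\<Sum>j<n. entropy (seq_type (\<xi> j N))) + real n * CARD('a) * ((ln (real N + 1) + 1) / real N))"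
  have "\<forall>\<^sub>F N in sequentially. mutual_pressure_term n h \<xi> N \<le> bound N"
    using eventually_gt_at_top[of 0]
  proof eventually_elim
    case (elim N)
    show ?case
      unfolding bound_def
      by (rule mutual_pressure_term_le[where \<xi> = \<xi> and n = n and N = N,
            OF approx_seq_length[OF approx] elim i_or_\<epsilon>])
  qed
  then have "mutual_pressure n h \<xi> \<le> limsup (\<lambda>N. ereal (bound N))"
    unfolding mutual_pressure_def by (intro Limsup_mono) simp
  moreover have tilt_lim: "(\<lambda>N. \<epsilon> * seq_type (\<xi> i N) t) \<longlonglongrightarrow> \<epsilon> * \<mu> i t"
    using i_or_\<epsilon> by (auto intro: tendsto_mult_left approx_seq_tendsto[OF approx])
  then have "bound \<longlonglongrightarrow> pressure (cube n) (tilted h i t \<epsilon>) - \<epsilon> * \<mu> i t - (\<Sum>j<n. entropy (\<mu> j))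
      + real n * CARD('a) * 0"
    unfolding bound_def
    by (intro tendsto_add tendsto_diff tendsto_const tilt_lim tendsto_sum tendsto_mult_left
        entropy_seq_type_tendsto[OF approx] ln_error_over_N_tendsto) auto
  then have "limsup (\<lambda>N. ereal (bound N))
      = ereal (pressure (cube n) (tilted h i t \<epsilon>) - \<epsilon> * \<mu> i t - (\<Sum>j<n. entropy (\<mu> j)))"
    by (intro lim_imp_Limsup) (simp_all add: tendsto_ereal)
  ultimately show ?thesis by simp
qed

corollary mutual_pressure_le:
  fixes h :: "(nat \<Rightarrow> 'a::{finite,linorder}) \<Rightarrow> real"
  assumes "approx_seq n \<mu> \<xi>"
  shows "mutual_pressure n h \<xi> \<le> ereal (pressure (cube n) h - (\<Sum>j<n. entropy (\<mu> j)))"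
  using mutual_pressure_le_tilted[OF assms, of 0 0 h undefined] by simp

definition marginal :: "nat \<Rightarrow> ((nat \<Rightarrow> 'a) \<Rightarrow> 'b::comm_monoid_add) \<Rightarrow> nat \<Rightarrow> 'a \<Rightarrow> 'b" where
  "marginal n f i t = (\<Sum>x\<in>cube n. if x i = t then f x else 0)"

lemma sum_marginal: "(\<Sum>t\<in>UNIV. marginal n f i t) = (\<Sum>x\<in>cube n. f (x :: nat \<Rightarrow> 'a::finite))"
  unfolding marginal_def by (subst sum.swap) simp

lemma gibbs_marginal_eq_marginal:
  "gibbs_marginal n h i t = marginal n (gibbs (cube n) (h :: (nat \<Rightarrow> 'a::finite) \<Rightarrow> real)) i t"
  by (simp add: gibbs_marginal_def marginal_def sum.inter_filter finite_cube)

lemma marginal_add: "marginal n (\<lambda>x. f x + g x) i t = marginal n f i t + marginal n g i t"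
  unfolding marginal_def sum.distrib[symmetric] by (rule sum.cong) simp_all

lemma marginal_sum:
  "finite J \<Longrightarrow> marginal n (\<lambda>x. \<Sum>j\<in>J. f j x) i t = (\<Sum>j\<in>J. marginal n (f j) i t)"
  unfolding marginal_def by (subst sum.swap) (intro sum.cong; simp add: sum.If_cases)

text \<open>The point of X^n whose i-th coordinate is s and whose other coordinates are a fixed
  default value; the correction step below only modifies a function on these n lines.\<close>
definition axis_point :: "nat \<Rightarrow> nat \<Rightarrow> 'a \<Rightarrow> nat \<Rightarrow> 'a" where
  "axis_point n i s = restrict (\<lambda>j. if j = i then s else undefined) {0..<n}"

lemma axis_point_in_cube: "axis_point n i s \<in> cube n"
  by (simp add: axis_point_def cube_def)

lemma marginal_axis_point:
  fixes c :: "'b::comm_monoid_add" and s :: "'a::finite"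
  assumes "i < n" "i' < n"
  shows "marginal n (\<lambda>x. if x = axis_point n i s then c else 0) i' t
       = (if (if i' = i then s else undefined) = t then c else 0)"
proof -
  have "marginal n (\<lambda>x. if x = axis_point n i s then c else 0) i' t
      = (\<Sum>x\<in>cube n. if x = axis_point n i s then (if x i' = t then c else 0) else 0)"
    unfolding marginal_def by (intro sum.cong) auto
  also have "\<dots> = (if axis_point n i s i' = t then c else 0)"
    using sum.delta[OF finite_cube, of "axis_point n i s" "\<lambda>x. if x i' = t then c else 0" n]
      axis_point_in_cube[of n i s] by simp
  finally show ?thesis using assms by (simp add: axis_point_def)
qed

definition marginal_correction ::
    "nat \<Rightarrow> ((nat \<Rightarrow> 'a) \<Rightarrow> 'b::ab_group_add) \<Rightarrow> (nat \<Rightarrow> 'a \<Rightarrow> 'b) \<Rightarrow> (nat \<Rightarrow> 'a) \<Rightarrow> 'b" where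
  "marginal_correction n b k x =
     b x + (\<Sum>i<n. \<Sum>s\<in>UNIV. if x = axis_point n i s then k i s - marginal n b i s else 0)"

lemma marginal_correction:
  fixes b :: "(nat \<Rightarrow> 'a::finite) \<Rightarrow> 'b::ab_group_add" and k :: "nat \<Rightarrow> 'a \<Rightarrow> 'b"
  assumes totals: "\<And>i. i < n \<Longrightarrow> (\<Sum>t\<in>UNIV. k i t) = (\<Sum>x\<in>cube n. b x)"
  shows "(\<Sum>x\<in>cube n. marginal_correction n b k x) = (\<Sum>x\<in>cube n. b x)"
    and "\<And>i t. i < n \<Longrightarrow> marginal n (marginal_correction n b k) i t = k i t"
proof -
  define e where "e i s = k i s - marginal n b i s" for i s
  define b' where "b' = marginal_correction n b k"
  have b'_eq: "b' = (\<lambda>x. b x + (\<Sum>i<n. \<Sum>s\<in>UNIV. if x = axis_point n i s then e i s else 0))"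
    unfolding e_def b'_def by (simp add: fun_eq_iff marginal_correction_def)
  have e_sum: "(\<Sum>s\<in>UNIV. e i s) = 0" if "i < n" for i
    using totals[OF that] unfolding e_def by (simp add: sum_subtractf sum_marginal)
  have "(\<Sum>x\<in>cube n. b' x) = (\<Sum>x\<in>cube n. b x)"
  proof -
    have line_sum: "(\<Sum>x\<in>cube n. \<Sum>s\<in>UNIV. if x = axis_point n i s then e i s else 0)
        = (\<Sum>s\<in>UNIV. e i s)" for i
      by (subst sum.swap) (simp add: sum.delta[OF finite_cube] axis_point_in_cube)
    have "(\<Sum>x\<in>cube n. b' x) = (\<Sum>x\<in>cube n. b x)
        + (\<Sum>x\<in>cube n. \<Sum>i<n. \<Sum>s\<in>UNIV. if x = axis_point n i s then e i s else 0)"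
      unfolding b'_eq by (simp add: sum.distrib)
    also have "(\<Sum>x\<in>cube n. \<Sum>i<n. \<Sum>s\<in>UNIV. if x = axis_point n i s then e i s else 0)
        = (\<Sum>i<n. \<Sum>x\<in>cube n. \<Sum>s\<in>UNIV. if x = axis_point n i s then e i s else 0)"
      by (rule sum.swap)
    finally show ?thesis by (simp add: line_sum e_sum)
  qed
  then show "(\<Sum>x\<in>cube n. marginal_correction n b k x) = (\<Sum>x\<in>cube n. b x)"
    by (simp add: b'_def)
  fix i' t assume i': "i' < n"
  have "marginal n (\<lambda>x. \<Sum>s\<in>UNIV. if x = axis_point n i s then e i s else 0) i' t
      = (if i' = i then e i t else 0)" if i: "i < n" for i
  proof -
    have "marginal n (\<lambda>x. \<Sum>s\<in>UNIV. if x = axis_point n i s then e i s else 0) i' t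
        = (\<Sum>s\<in>UNIV. if (if i' = i then s else undefined) = t then e i s else 0)"
      by (simp add: marginal_sum marginal_axis_point[OF i i'])
    also have "\<dots> = (if i' = i then e i t else 0)"
      using e_sum[OF i] by (cases "i' = i"; cases "undefined = t") auto
    finally show ?thesis .
  qed
  then have "marginal n b' i' t = marginal n b i' t + (\<Sum>i<n. if i' = i then e i t else 0)"
    by (simp add: b'_eq marginal_add marginal_sum)
  also have "\<dots> = k i' t" using i' unfolding e_def by simp
  finally show "marginal n (marginal_correction n b k) i' t = k i' t" by (simp add: b'_def)
qed

lemma marginal_tendsto:
  assumes "\<And>x. x \<in> cube n \<Longrightarrow> ((\<lambda>N. f N x) \<longlongrightarrow> g x) F"
  shows "((\<lambda>N. marginal n (f N) i t) \<longlongrightarrow> (marginal n g i t :: real)) F"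
  unfolding marginal_def using assms by (intro tendsto_sum) auto

lemma marginal_cong: "(\<And>x. x \<in> cube n \<Longrightarrow> f x = g x) \<Longrightarrow> marginal n f i t = marginal n g i t"
  unfolding marginal_def by (rule sum.cong) simp_all

lemma of_int_marginal: "real_of_int (marginal n f i t) = marginal n (\<lambda>x. real_of_int (f x)) i t"
  unfolding marginal_def of_int_sum by (rule sum.cong) simp_all

lemma of_nat_marginal: "int (marginal n f i t) = marginal n (\<lambda>x. int (f x)) i t"
  unfolding marginal_def of_nat_sum by (rule sum.cong) simp_all

lemma marginal_divide: "marginal n (\<lambda>x. f x / c) i t = marginal n f i t / (c :: real)"
  unfolding marginal_def sum_divide_distrib by (rule sum.cong) simp_all

text \<open>Rounding N \<pi> to integers with total exactly N: take floors and put the remainder on one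
  fixed point. The remainder is o(N), so the rounded values divided by N still tend to \<pi>.\<close>
lemma integer_rounding:
  fixes \<pi> :: "(nat \<Rightarrow> 'a::finite) \<Rightarrow> real"
  assumes total: "(\<Sum>x\<in>cube n. \<pi> x) = 1"
  obtains r :: "nat \<Rightarrow> (nat \<Rightarrow> 'a) \<Rightarrow> int"
  where "\<And>N. (\<Sum>x\<in>cube n. r N x) = int N"
    and "\<And>x. (\<lambda>N. real_of_int (r N x) / real N) \<longlonglongrightarrow> \<pi> x"
proof
  define x0 :: "nat \<Rightarrow> 'a" where "x0 = axis_point n 0 undefined"
  define fl where "fl N x = \<lfloor>real N * \<pi> x\<rfloor>" for N x
  define rest where "rest N = int N - (\<Sum>x\<in>cube n. fl N x)" for N
  define r where "r N x = fl N x + (if x = x0 then rest N else 0)" for N x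
  have x0: "x0 \<in> cube n" by (simp add: x0_def axis_point_in_cube)
  show "(\<Sum>x\<in>cube n. r N x) = int N" for N
    using x0 by (simp add: r_def sum.distrib finite_cube rest_def)
  have fl_lim: "(\<lambda>N. real_of_int (fl N x) / real N) \<longlonglongrightarrow> \<pi> x" for x
    unfolding fl_def by (rule floor_over_N_tendsto)
  have "(\<lambda>N. real N / real N - (\<Sum>x\<in>cube n. real_of_int (fl N x) / real N)) \<longlonglongrightarrow> 1 - (\<Sum>x\<in>cube n. \<pi> x)"
  proof (intro tendsto_diff tendsto_sum fl_lim)
    show "(\<lambda>N. real N / real N) \<longlonglongrightarrow> 1"
      by (rule Lim_transform_eventually[OF tendsto_const])
         (use eventually_gt_at_top[of 0] in \<open>eventually_elim, simp\<close>)
  qed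
  moreover have "real_of_int (rest N) / real N
      = real N / real N - (\<Sum>x\<in>cube n. real_of_int (fl N x) / real N)" for N
    by (simp add: rest_def diff_divide_distrib sum_divide_distrib)
  ultimately have rest_lim: "(\<lambda>N. real_of_int (rest N) / real N) \<longlonglongrightarrow> 0"
    using total by simp
  show "(\<lambda>N. real_of_int (r N x) / real N) \<longlonglongrightarrow> \<pi> x" for x
    using tendsto_add[OF fl_lim rest_lim, of x] fl_lim[of x]
    by (cases "x = x0") (simp_all add: r_def add_divide_distrib)
qed

text \<open>The corrected rounding still approximates \<pi>: if r_N/N \<rightarrow> \<pi> and the prescribed marginals
  k_N/N tend to the marginals of \<pi>, all correction terms are o(N).\<close>
lemma marginal_correction_tendsto:
  fixes r :: "nat \<Rightarrow> (nat \<Rightarrow> 'a::finite) \<Rightarrow> int" and k :: "nat \<Rightarrow> nat \<Rightarrow> 'a \<Rightarrow> int"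
  assumes r_lim: "\<And>x. (\<lambda>N. real_of_int (r N x) / real N) \<longlonglongrightarrow> \<pi> x"
    and k_lim: "\<And>i t. i < n \<Longrightarrow> (\<lambda>N. real_of_int (k N i t) / real N) \<longlonglongrightarrow> marginal n \<pi> i t"
  shows "(\<lambda>N. real_of_int (marginal_correction n (r N) (k N) x) / real N) \<longlonglongrightarrow> \<pi> x"
proof -
  define d where "d N i s = real_of_int (k N i s) / real N - real_of_int (marginal n (r N) i s) / real N"
    for N i s
  have "(\<lambda>N. d N i s) \<longlonglongrightarrow> 0" if "i < n" for i s
  proof -
    have "(\<lambda>N. real_of_int (k N i s) / real N - marginal n (\<lambda>x. real_of_int (r N x) / real N) i s)
        \<longlonglongrightarrow> marginal n \<pi> i s - marginal n \<pi> i s"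
      by (intro tendsto_diff k_lim[OF that] marginal_tendsto r_lim)
    then show ?thesis by (simp add: d_def of_int_marginal marginal_divide)
  qed
  then have "(\<lambda>N. if x = axis_point n i s then d N i s else 0) \<longlonglongrightarrow> 0" if "i < n" for i s
    using that by (cases "x = axis_point n i s") simp_all
  then have "(\<lambda>N. real_of_int (r N x) / real N
      + (\<Sum>i<n. \<Sum>s\<in>UNIV. if x = axis_point n i s then d N i s else 0)) \<longlonglongrightarrow> \<pi> x + 0"
    by (intro tendsto_add r_lim tendsto_null_sum) auto
  moreover have "real_of_int (marginal_correction n (r N) (k N) x) / real N = real_of_int (r N x) / real N
      + (\<Sum>i<n. \<Sum>s\<in>UNIV. if x = axis_point n i s then d N i s else 0)" for N
    unfolding marginal_correction_def of_int_add of_int_sum add_divide_distrib sum_divide_distrib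
    by (intro arg_cong2[where f = "(+)"] sum.cong refl) (simp add: d_def diff_divide_distrib)
  ultimately show ?thesis by simp
qed

lemma nat_counts:
  fixes c :: "(nat \<Rightarrow> 'a::finite) \<Rightarrow> int"
  assumes nonneg: "\<And>x. x \<in> cube n \<Longrightarrow> c x \<ge> 0" and total: "(\<Sum>x\<in>cube n. c x) = int N"
    and marg: "\<And>i t. i < n \<Longrightarrow> marginal n c i t = int (k i t)"
  shows "(\<Sum>x\<in>cube n. nat (c x)) = N" and "\<And>i t. i < n \<Longrightarrow> marginal n (\<lambda>x. nat (c x)) i t = k i t"
proof -
  have "int (\<Sum>x\<in>cube n. nat (c x)) = (\<Sum>x\<in>cube n. c x)"
    unfolding of_nat_sum using nonneg by (intro sum.cong) auto
  then show "(\<Sum>x\<in>cube n. nat (c x)) = N" by (simp only: total of_nat_eq_iff)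
  fix i t assume "i < n"
  have "marginal n (\<lambda>x. int (nat (c x))) i t = marginal n c i t"
    using nonneg by (intro marginal_cong) auto
  then have "int (marginal n (\<lambda>x. nat (c x)) i t) = int (k i t)"
    using marg[OF \<open>i < n\<close>] by (simp add: of_nat_marginal)
  then show "marginal n (\<lambda>x. nat (c x)) i t = k i t" by simp
qed

text \<open>Approximate couplings with exact integer marginals: if the given counts k_i(N) of each
  coordinate have total N and k_i(N)/N \<rightarrow> marginal_i(\<pi>) for a strictly positive probability \<pi>
  on X^n, there are counts m_N on X^n with exactly these marginals (for large N) and
  m_N/N \<rightarrow> \<pi>: round N \<pi>, then correct the marginals.\<close>
lemma integer_coupling:
  fixes \<pi> :: "(nat \<Rightarrow> 'a::finite) \<Rightarrow> real" and k :: "nat \<Rightarrow> nat \<Rightarrow> 'a \<Rightarrow> nat"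
  assumes pos: "\<And>x. x \<in> cube n \<Longrightarrow> \<pi> x > 0"
    and total: "(\<Sum>x\<in>cube n. \<pi> x) = 1"
    and k_total: "\<And>i N. i < n \<Longrightarrow> (\<Sum>t\<in>UNIV. k i N t) = N"
    and k_lim: "\<And>i t. i < n \<Longrightarrow> (\<lambda>N. real (k i N t) / real N) \<longlonglongrightarrow> marginal n \<pi> i t"
  obtains m :: "nat \<Rightarrow> (nat \<Rightarrow> 'a) \<Rightarrow> nat"
  where "\<forall>\<^sub>F N in sequentially.
           (\<Sum>x\<in>cube n. m N x) = N \<and> (\<forall>i<n. \<forall>t. marginal n (m N) i t = k i N t)"
    and "\<And>x. x \<in> cube n \<Longrightarrow> (\<lambda>N. real (m N x) / real N) \<longlonglongrightarrow> \<pi> x"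
proof -
  obtain r :: "nat \<Rightarrow> (nat \<Rightarrow> 'a) \<Rightarrow> int"
    where r_total: "\<And>N. (\<Sum>x\<in>cube n. r N x) = int N"
      and r_lim: "\<And>x. (\<lambda>N. real_of_int (r N x) / real N) \<longlonglongrightarrow> \<pi> x"
    using integer_rounding[OF total] by blast
  define c where "c N = marginal_correction n (r N) (\<lambda>i t. int (k i N t))" for N
  have c_total: "(\<Sum>x\<in>cube n. c N x) = int N"
    and c_marginal: "\<And>i t. i < n \<Longrightarrow> marginal n (c N) i t = int (k i N t)" for N
    using marginal_correction[of n "\<lambda>i t. int (k i N t)" "r N"] k_total r_total
    by (simp_all add: c_def flip: of_nat_sum)
  have c_lim: "(\<lambda>N. real_of_int (c N x) / real N) \<longlonglongrightarrow> \<pi> x" for x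
    unfolding c_def using r_lim k_lim by (intro marginal_correction_tendsto) simp_all
  have "\<forall>\<^sub>F N in sequentially. \<forall>x\<in>cube n :: (nat \<Rightarrow> 'a) set. c N x \<ge> 0"
  proof (rule eventually_ball_finite[OF finite_cube], rule ballI)
    fix x :: "nat \<Rightarrow> 'a" assume "x \<in> cube n"
    then have "\<forall>\<^sub>F N in sequentially. real_of_int (c N x) / real N > 0"
      using order_tendstoD(1)[OF c_lim pos] by blast
    then show "\<forall>\<^sub>F N in sequentially. c N x \<ge> 0"
      by eventually_elim (auto simp: zero_less_divide_iff)
  qed
  then have c_nonneg: "\<forall>\<^sub>F N in sequentially. \<forall>x\<in>cube n :: (nat \<Rightarrow> 'a) set. c N x \<ge> 0" .
  show thesis
  proof (rule that[of "\<lambda>N x. nat (c N x)"])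
    show "\<forall>\<^sub>F N in sequentially. (\<Sum>x\<in>cube n. nat (c N x)) = N
        \<and> (\<forall>i<n. \<forall>t. marginal n (\<lambda>x. nat (c N x)) i t = k i N t)"
      using c_nonneg
    proof eventually_elim
      case (elim N)
      then show ?case using nat_counts[of n "c N" N "\<lambda>i t. k i N t"] c_total c_marginal by simp
    qed
    show "(\<lambda>N. real (nat (c N x)) / real N) \<longlonglongrightarrow> \<pi> x" if "x \<in> cube n" for x
    proof (rule Lim_transform_eventually[OF c_lim])
      show "\<forall>\<^sub>F N in sequentially. real_of_int (c N x) / real N = real (nat (c N x)) / real N"
        using c_nonneg by eventually_elim (use that in simp)
    qed
  qed
qed

definition counts_mset :: "'b set \<Rightarrow> ('b \<Rightarrow> nat) \<Rightarrow> 'b multiset" where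
  "counts_mset C m = (\<Sum>x\<in>C. replicate_mset (m x) x)"

lemma count_counts_mset: "finite C \<Longrightarrow> count (counts_mset C m) y = (if y \<in> C then m y else 0)"
  unfolding counts_mset_def by (induction C rule: finite_induct) auto

lemma size_counts_mset: "finite C \<Longrightarrow> size (counts_mset C m) = (\<Sum>x\<in>C. m x)"
  unfolding counts_mset_def by (induction C rule: finite_induct) auto

lemma set_counts_mset: "finite C \<Longrightarrow> set_mset (counts_mset C m) \<subseteq> C"
  unfolding counts_mset_def by (induction C rule: finite_induct) auto

lemma sum_image_counts_mset:
  "finite C \<Longrightarrow> sum_mset (image_mset h (counts_mset C m)) = (\<Sum>x\<in>C. real (m x) * h x)"
  unfolding counts_mset_def by (induction C rule: finite_induct) auto

lemma permutations_of_counts_mset: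
  assumes "finite C" "z \<in> permutations_of_multiset (counts_mset C m)"
  shows "set z \<subseteq> C" "length z = (\<Sum>x\<in>C. m x)"
proof -
  have "mset z = counts_mset C m" using assms(2) by (simp add: permutations_of_multiset_def)
  then show "set z \<subseteq> C" "length z = (\<Sum>x\<in>C. m x)"
    using set_counts_mset[OF assms(1), of m] size_counts_mset[OF assms(1), of m]
    by (metis set_mset_mset, metis size_mset)
qed

lemma ln_card_permutations_of_counts_mset:
  assumes "finite C" "(\<Sum>x\<in>C. m x) = N"
  shows "ln (real (card (permutations_of_multiset (counts_mset C m))))
       = ln (fact N) - (\<Sum>x\<in>C. ln (fact (m x)))"
proof -
  have "(\<Sum>x\<in>C. ln (fact (count (counts_mset C m) x))) = (\<Sum>x\<in>C. ln (fact (m x)))"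
    using assms(1) by (intro sum.cong) (simp_all add: count_counts_mset)
  then show ?thesis
    using ln_card_permutations_of_multiset[OF assms(1) set_counts_mset[OF assms(1)]]
      size_counts_mset[OF assms(1), of m] assms(2)
    by simp
qed

lemma count_image_counts_mset:
  fixes m :: "(nat \<Rightarrow> 'a::finite) \<Rightarrow> nat"
  shows "count (image_mset (\<lambda>p. p i) (counts_mset (cube n) m)) t = marginal n m i t"
proof -
  have "count (image_mset (\<lambda>p. p i) (counts_mset (cube n) m)) t
      = (\<Sum>y\<in>(\<lambda>p. p i) -` {t} \<inter> set_mset (counts_mset (cube n) m). count (counts_mset (cube n) m) y)"
    by (rule count_image_mset)
  also have "\<dots> = (\<Sum>y\<in>{x\<in>cube n. x i = t}. count (counts_mset (cube n) m) y)"
    using set_counts_mset[OF finite_cube, of n m]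
    by (intro sum.mono_neutral_left) (auto simp: finite_cube count_eq_zero_iff)
  finally show ?thesis
    by (simp add: count_counts_mset finite_cube marginal_def sum.inter_filter)
qed

definition transpose_rows :: "nat \<Rightarrow> (nat \<Rightarrow> 'a) list \<Rightarrow> nat \<Rightarrow> 'a list" where
  "transpose_rows n z = restrict (\<lambda>i. map (\<lambda>p. p i) z) {0..<n}"

lemma column_transpose_rows:
  assumes "set z \<subseteq> cube n" "j < length z"
  shows "column n (transpose_rows n z) j = z ! j"
proof -
  have "z ! j \<in> cube n" using assms(1) nth_mem[OF assms(2)] by blast
  then have "z ! j \<in> extensional {0..<n}" by (simp add: cube_def PiE_iff)
  then show ?thesis
    using assms(2) by (auto simp: column_def transpose_rows_def extensional_def fun_eq_iff)
qed

lemma kappa_sum_transpose_rows: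
  assumes "set z \<subseteq> cube n" "length z = N"
  shows "kappa_sum n N h (transpose_rows n z) = sum_list (map h z)"
  using assms by (simp add: kappa_sum_columns column_transpose_rows sum_list_sum_nth atLeast0LessThan)

lemma inj_on_transpose_rows: "inj_on (transpose_rows n) {z. set z \<subseteq> cube n \<and> length z = N}"
proof (rule inj_onI)
  fix z z' assume z: "z \<in> {z. set z \<subseteq> cube n \<and> length z = N}" "z' \<in> {z. set z \<subseteq> cube n \<and> length z = N}"
    and eq: "transpose_rows n z = transpose_rows n z'"
  show "z = z'"
  proof (rule nth_equalityI)
    show "length z = length z'" using z by simp
    fix j assume "j < length z"
    then show "z ! j = z' ! j"
      using z column_transpose_rows[of z n j] column_transpose_rows[of z' n j] eq by simp
  qed
qed

text \<open>Lower bound for the rearrangement sum: if the counts m on X^n have total N and the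
  marginals of the xs_i, every arrangement of the multiset given by m yields, column by column,
  a distinct tuple of rearrangements of the xs_i, each contributing e^{\<Sum> m h}; the number of
  arrangements is the multinomial coefficient N! / \<Prod> m(x)!.\<close>
lemma rearrangement_sum_ge:
  fixes h :: "(nat \<Rightarrow> 'a::finite) \<Rightarrow> real" and m :: "(nat \<Rightarrow> 'a) \<Rightarrow> nat"
  assumes len: "\<And>i. i < n \<Longrightarrow> length (xs i) = N"
    and total: "(\<Sum>x\<in>cube n. m x) = N"
    and marg: "\<And>i t. i < n \<Longrightarrow> marginal n m i t = count_list (xs i) t"
  shows "ln (fact N) - (\<Sum>x\<in>cube n. ln (fact (m x))) + (\<Sum>x\<in>cube n. real (m x) * h x)
       \<le> ln (rearrangement_sum n N h xs)"
proof -
  define M where "M = counts_mset (cube n) m"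
  define A where "A = permutations_of_multiset M"
  define E where "E = (\<Sum>x\<in>cube n. real (m x) * h x)"
  have A: "set z \<subseteq> cube n" "length z = N" if "z \<in> A" for z
    using permutations_of_counts_mset[OF finite_cube] that total by (auto simp: A_def M_def)
  have into: "transpose_rows n z \<in> PiE {0..<n} (\<lambda>i. permutations_of_multiset (mset (xs i)))"
    if "z \<in> A" for z
  proof -
    have "mset (map (\<lambda>p. p i) z) = mset (xs i)" if "i < n" for i
      using \<open>z \<in> A\<close> marg[OF that] count_image_counts_mset[of i n m]
      by (intro multiset_eqI) (simp add: A_def M_def permutations_of_multiset_def count_mset)
    then show ?thesis by (auto simp: transpose_rows_def permutations_of_multiset_def)
  qed
  have kappa: "kappa_sum n N h (transpose_rows n z) = E" if "z \<in> A" for z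
  proof -
    have "mset z = M" using that by (simp add: A_def permutations_of_multiset_def)
    then have "sum_list (map h z) = E"
      by (metis E_def M_def finite_cube mset_map sum_image_counts_mset sum_mset_sum_list)
    then show ?thesis using kappa_sum_transpose_rows[OF A[OF that]] by simp
  qed
  have inj: "inj_on (transpose_rows n) A"
    by (rule inj_on_subset[OF inj_on_transpose_rows[of n N]]) (use A in blast)
  have "real (card A) * exp E = (\<Sum>z\<in>A. exp (kappa_sum n N h (transpose_rows n z)))"
    by (simp add: kappa)
  also have "\<dots> = (\<Sum>ys\<in>transpose_rows n ` A. exp (kappa_sum n N h ys))"
    by (rule sum.reindex[OF inj, symmetric, unfolded o_def])
  also have "\<dots> \<le> rearrangement_sum n N h xs"
    unfolding rearrangement_sum_def using into by (intro sum_mono2) (auto simp: finite_PiE)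
  finally have "ln (real (card A) * exp E) \<le> ln (rearrangement_sum n N h xs)"
    using ln_le_cancel_iff[of "real (card A) * exp E" "rearrangement_sum n N h xs"]
    by (simp add: A_def card_gt_0_iff rearrangement_sum_pos)
  moreover have "ln (real (card A)) = ln (fact N) - (\<Sum>x\<in>cube n. ln (fact (m x)))"
    unfolding A_def M_def using total by (rule ln_card_permutations_of_counts_mset[OF finite_cube])
  ultimately show ?thesis by (simp add: A_def ln_mult card_gt_0_iff E_def)
qed

lemma gibbs_cube_eq:
  fixes h :: "(nat \<Rightarrow> 'a::finite) \<Rightarrow> real"
  shows "gibbs (cube n) h x = exp (h x) / (\<Sum>y\<in>cube n. exp (h y))"
  using partition_function_pos[of h n] by (simp add: gibbs_def pressure_def exp_diff)

lemma sum_gibbs_cube: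
  fixes h :: "(nat \<Rightarrow> 'a::finite) \<Rightarrow> real"
  shows "(\<Sum>x\<in>cube n. gibbs (cube n) h x) = 1"
  using partition_function_pos[of h n] by (simp add: gibbs_cube_eq sum_divide_distrib[symmetric])

lemma gibbs_variational_identity:
  fixes h :: "(nat \<Rightarrow> 'a::finite) \<Rightarrow> real"
  shows "set_entropy (cube n) (gibbs (cube n) h) + (\<Sum>x\<in>cube n. gibbs (cube n) h x * h x)
       = pressure (cube n) h"
proof -
  have "set_entropy (cube n) (gibbs (cube n) h)
      = - (\<Sum>x\<in>cube n. gibbs (cube n) h x * (h x - pressure (cube n) h))"
    by (simp add: set_entropy_def gibbs_def)
  also have "\<dots> = pressure (cube n) h * (\<Sum>x\<in>cube n. gibbs (cube n) h x)
      - (\<Sum>x\<in>cube n. gibbs (cube n) h x * h x)"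
    by (simp add: algebra_simps sum_subtractf sum_distrib_left)
  finally show ?thesis by (simp add: sum_gibbs_cube)
qed

lemma mutual_pressure_term_ge:
  fixes h :: "(nat \<Rightarrow> 'a::finite) \<Rightarrow> real" and m :: "(nat \<Rightarrow> 'a) \<Rightarrow> nat"
  assumes len: "\<And>i. i < n \<Longrightarrow> length (\<xi> i N) = N" and N: "N > 0"
    and total: "(\<Sum>x\<in>cube n. m x) = N"
    and marg: "\<And>i t. i < n \<Longrightarrow> marginal n m i t = count_list (\<xi> i N) t"
  shows "set_entropy (cube n) (\<lambda>x. real (m x) / real N) + (\<Sum>x\<in>cube n. real (m x) / real N * h x)
         - (\<Sum>i<n. entropy (seq_type (\<xi> i N)))
         - (real (card (cube n :: (nat \<Rightarrow> 'a) set)) + real n) * ((ln (real N + 1) + 1) / real N)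
       \<le> mutual_pressure_term n h \<xi> N"
proof -
  define L where "L = ln (real N + 1) + 1"
  define D where "D = real (card (cube n :: (nat \<Rightarrow> 'a) set))"
  define LA where "LA = (\<Sum>i<n. ln (real (card (permutations_of_multiset (mset (\<xi> i N))))))"
  define S where "S = (\<Sum>i<n. entropy (seq_type (\<xi> i N)))"
  define H where "H = set_entropy (cube n) (\<lambda>x. real (m x) / real N)"
  have W: "ln (fact N) - (\<Sum>x\<in>cube n. ln (fact (m x))) + (\<Sum>x\<in>cube n. real (m x) * h x)
      \<le> ln (rearrangement_sum n N h (\<lambda>i. \<xi> i N))"
    using len total marg by (rule rearrangement_sum_ge)
  have "real N * H - D * L \<le> ln (fact N) - (\<Sum>x\<in>cube n. ln (fact (m x)))"
    unfolding H_def D_def L_def using total N by (intro ln_multinomial_lower finite_cube)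
  moreover have "LA \<le> (\<Sum>i<n. real N * entropy (seq_type (\<xi> i N)) + L)"
    unfolding LA_def L_def
    using ln_card_rearrangements_bounds(2)[OF len N] by (intro sum_mono) (simp add: add.assoc)
  moreover have "(\<Sum>i<n. real N * entropy (seq_type (\<xi> i N)) + L) = real N * S + real n * L"
    by (simp add: S_def sum.distrib sum_distrib_left)
  moreover have "(\<Sum>x\<in>cube n. real (m x) * h x) = real N * (\<Sum>x\<in>cube n. real (m x) / real N * h x)"
    using N by (simp add: sum_distrib_left)
  ultimately have "real N * (H + (\<Sum>x\<in>cube n. real (m x) / real N * h x) - S) - (D + real n) * L
      \<le> ln (rearrangement_sum n N h (\<lambda>i. \<xi> i N)) - LA"
    using W by (simp add: algebra_simps)
  then have "(real N * (H + (\<Sum>x\<in>cube n. real (m x) / real N * h x) - S) - (D + real n) * L) / real N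
      \<le> (ln (rearrangement_sum n N h (\<lambda>i. \<xi> i N)) - LA) / real N"
    by (rule divide_right_mono) simp
  moreover have "(real N * (H + (\<Sum>x\<in>cube n. real (m x) / real N * h x) - S) - (D + real n) * L) / real N
      = H + (\<Sum>x\<in>cube n. real (m x) / real N * h x) - S - (D + real n) * (L / real N)"
    using N by (simp add: field_simps)
  ultimately show ?thesis
    by (simp add: mutual_pressure_term_eq[where \<xi> = \<xi> and n = n and N = N, OF len N] LA_def S_def H_def
        D_def L_def)
qed

text \<open>If the \<mu>_i are the marginals of the Gibbs measure \<mu>_h, integer couplings m_N/N \<rightarrow> \<mu>_h with
  the marginal counts of \<xi>(N) exist, and the finite-N lower bound tends to
  S(\<mu>_h) + \<integral> h d\<mu>_h - \<Sum> S(\<mu>_i) = P(h) - \<Sum> S(\<mu>_i).\<close>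
lemma mutual_pressure_ge:
  fixes h :: "(nat \<Rightarrow> 'a::{finite,linorder}) \<Rightarrow> real"
  assumes approx: "approx_seq n \<mu> \<xi>"
    and gibbs: "\<And>i t. i < n \<Longrightarrow> \<mu> i t = gibbs_marginal n h i t"
  shows "ereal (pressure (cube n) h - (\<Sum>i<n. entropy (\<mu> i))) \<le> mutual_pressure n h \<xi>"
proof -
  define \<pi> where "\<pi> = gibbs (cube n) h"
  obtain m :: "nat \<Rightarrow> (nat \<Rightarrow> 'a) \<Rightarrow> nat"
    where m_counts: "\<forall>\<^sub>F N in sequentially. (\<Sum>x\<in>cube n. m N x) = N
        \<and> (\<forall>i<n. \<forall>t. marginal n (m N) i t = count_list (\<xi> i N) t)"
      and m_lim: "\<And>x. x \<in> cube n \<Longrightarrow> (\<lambda>N. real (m N x) / real N) \<longlonglongrightarrow> \<pi> x"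
  proof (rule integer_coupling[of n \<pi> "\<lambda>i N t. count_list (\<xi> i N) t"])
    show "\<pi> x > 0" for x by (simp add: \<pi>_def gibbs_def)
    show "(\<Sum>x\<in>cube n. \<pi> x) = 1" by (simp add: \<pi>_def sum_gibbs_cube)
    show "(\<Sum>t\<in>UNIV. count_list (\<xi> i N) t) = N" if "i < n" for i N
      using approx_seq_length[OF approx that] by (simp add: sum_count_set)
    show "(\<lambda>N. real (count_list (\<xi> i N) t) / real N) \<longlonglongrightarrow> marginal n \<pi> i t" if "i < n" for i t
      using approx_seq_tendsto[OF approx that, of t] approx_seq_length[OF approx that] gibbs[OF that]
      by (simp add: seq_type_def \<pi>_def gibbs_marginal_eq_marginal)
  qed blast
  define bound where "bound N = set_entropy (cube n) (\<lambda>x. real (m N x) / real N)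
      + (\<Sum>x\<in>cube n. real (m N x) / real N * h x) - (\<Sum>i<n. entropy (seq_type (\<xi> i N)))
      - (real (card (cube n :: (nat \<Rightarrow> 'a) set)) + real n) * ((ln (real N + 1) + 1) / real N)" for N
  have "\<forall>\<^sub>F N in sequentially. bound N \<le> mutual_pressure_term n h \<xi> N"
    using m_counts eventually_gt_at_top[of 0]
  proof eventually_elim
    case (elim N)
    then show ?case unfolding bound_def
      by (intro mutual_pressure_term_ge[where \<xi> = \<xi> and n = n and N = N,
            OF approx_seq_length[OF approx]]) simp_all
  qed
  then have "limsup (\<lambda>N. ereal (bound N)) \<le> mutual_pressure n h \<xi>"
    unfolding mutual_pressure_def by (intro Limsup_mono) simp
  moreover have "bound \<longlonglongrightarrow> set_entropy (cube n) \<pi> + (\<Sum>x\<in>cube n. \<pi> x * h x)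
      - (\<Sum>i<n. entropy (\<mu> i)) - (real (card (cube n :: (nat \<Rightarrow> 'a) set)) + real n) * 0"
    unfolding bound_def using m_lim
    by (intro tendsto_intros set_entropy_tendsto finite_cube ln_error_over_N_tendsto
        entropy_seq_type_tendsto[OF approx]) auto
  then have "limsup (\<lambda>N. ereal (bound N)) = ereal (pressure (cube n) h - (\<Sum>i<n. entropy (\<mu> i)))"
    using gibbs_variational_identity[of n h] by (intro lim_imp_Limsup) (simp_all add: tendsto_ereal \<pi>_def)
  ultimately show ?thesis by simp
qed

lemma exists_less_of_nonzero_deriv:
  assumes "(f has_real_derivative l) (at x)" "l \<noteq> 0"
  shows "\<exists>y. f y < f x"
proof (cases "l > 0")
  case True
  then obtain d where "d > 0" "\<And>h. h > 0 \<Longrightarrow> h < d \<Longrightarrow> f (x - h) < f x"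
    using DERIV_pos_inc_left[OF assms(1)] by blast
  then have "f (x - d / 2) < f x" by simp
  then show ?thesis by blast
next
  case False
  then have "l < 0" using assms(2) by simp
  then obtain d where "d > 0" "\<And>h. h > 0 \<Longrightarrow> h < d \<Longrightarrow> f x > f (x + h)"
    using DERIV_neg_dec_right[OF assms(1)] by blast
  then have "f (x + d / 2) < f x" by simp
  then show ?thesis by blast
qed

lemma tilted_pressure_deriv:
  fixes h :: "(nat \<Rightarrow> 'a::finite) \<Rightarrow> real"
  shows "((\<lambda>\<epsilon>. pressure (cube n) (tilted h i t \<epsilon>) - \<epsilon> * c)
          has_real_derivative (gibbs_marginal n h i t - c)) (at 0)"
proof -
  define g where "g x = (if x i = t then 1 else 0 :: real)" for x :: "nat \<Rightarrow> 'a"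
  define Z where "Z = (\<Sum>x\<in>cube n. exp (h x))"
  have Z: "Z > 0" unfolding Z_def by (rule partition_function_pos)
  have deriv: "((\<lambda>\<epsilon>. ln (\<Sum>x\<in>cube n. exp (h x + \<epsilon> * g x)) - \<epsilon> * c)
      has_real_derivative ((\<Sum>x\<in>cube n. exp (h x) * g x) / Z - c)) (at 0)"
    by (auto intro!: derivative_eq_intros simp: Z_def[symmetric] Z)
  have "(\<Sum>x\<in>cube n. exp (h x) * g x) / Z = marginal n (\<lambda>x. exp (h x) / Z) i t"
    unfolding sum_divide_distrib marginal_def by (rule sum.cong) (simp_all add: g_def)
  moreover have "gibbs (cube n) h = (\<lambda>x. exp (h x) / Z)"
    by (simp add: fun_eq_iff gibbs_cube_eq Z_def)
  ultimately have "(\<Sum>x\<in>cube n. exp (h x) * g x) / Z = gibbs_marginal n h i t"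
    by (simp add: gibbs_marginal_eq_marginal)
  with deriv show ?thesis by (simp add: pressure_def tilted_def g_def)
qed

lemma tilted_pressure_below:
  fixes h :: "(nat \<Rightarrow> 'a::finite) \<Rightarrow> real"
  assumes "c \<noteq> gibbs_marginal n h i t"
  shows "\<exists>\<epsilon>. pressure (cube n) (tilted h i t \<epsilon>) - \<epsilon> * c < pressure (cube n) h"
  using exists_less_of_nonzero_deriv[OF tilted_pressure_deriv[of n h i t c]] assms by simp

lemma gibbs_marginal_eq_gibbs_partial_log_sum:
  fixes h :: "(nat \<Rightarrow> 'a::finite) \<Rightarrow> real"
  assumes i: "i < n"
  shows "gibbs_marginal n h i t = gibbs UNIV (partial_log_sum n h i) t"
proof -
  define a where "a s = (\<Sum>x\<in>{x\<in>cube n. x i = s}. exp (h x))" for s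
  define Z where "Z = (\<Sum>x\<in>cube n. exp (h x))"
  have a_pos: "a s > 0" for s
  proof -
    have "axis_point n i s \<in> {x\<in>cube n. x i = s}"
      using i axis_point_in_cube[of n i s] by (simp add: axis_point_def)
    then show ?thesis
      unfolding a_def by (intro sum_pos2[where i = "axis_point n i s"]) (auto simp: finite_cube)
  qed
  have "(\<Sum>s\<in>UNIV. a s) = Z"
    using sum_marginal[of n "\<lambda>x. exp (h x)" i]
    by (simp add: a_def Z_def marginal_def sum.inter_filter finite_cube)
  then have "gibbs UNIV (partial_log_sum n h i) t = a t / Z"
    using a_pos partition_function_pos[of h n]
    by (simp add: gibbs_def pressure_def partial_log_sum_def a_def[symmetric] exp_diff Z_def)
  also have "\<dots> = gibbs_marginal n h i t"
    by (simp add: gibbs_marginal_def gibbs_cube_eq Z_def[symmetric] a_def sum_divide_distrib)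
  finally show ?thesis by simp
qed

text \<open>Equality in the upper bound characterises the Gibbs marginals: the upper bound is
  attained by the lower bound when the \<mu>_i are the Gibbs marginals, and is strictly improved by
  a suitable tilt otherwise.\<close>
lemma mutual_pressure_eq_iff_gibbs_marginals:
  fixes h :: "(nat \<Rightarrow> 'a::{finite,linorder}) \<Rightarrow> real"
  assumes approx: "approx_seq n \<mu> \<xi>"
  shows "mutual_pressure n h \<xi> = ereal (pressure (cube n) h - (\<Sum>i<n. entropy (\<mu> i)))
     \<longleftrightarrow> (\<forall>i<n. \<forall>t. \<mu> i t = gibbs_marginal n h i t)"
proof
  assume eq: "mutual_pressure n h \<xi> = ereal (pressure (cube n) h - (\<Sum>i<n. entropy (\<mu> i)))"
  show "\<forall>i<n. \<forall>t. \<mu> i t = gibbs_marginal n h i t"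
  proof (intro allI impI, rule ccontr)
    fix i t assume i: "i < n" and "\<mu> i t \<noteq> gibbs_marginal n h i t"
    then obtain \<epsilon> where "pressure (cube n) (tilted h i t \<epsilon>) - \<epsilon> * \<mu> i t < pressure (cube n) h"
      using tilted_pressure_below by blast
    then show False
      using mutual_pressure_le_tilted[OF approx, of i \<epsilon> h t] i eq by simp
  qed
next
  assume "\<forall>i<n. \<forall>t. \<mu> i t = gibbs_marginal n h i t"
  then have "ereal (pressure (cube n) h - (\<Sum>i<n. entropy (\<mu> i))) \<le> mutual_pressure n h \<xi>"
    by (intro mutual_pressure_ge[OF approx]) simp
  moreover have "mutual_pressure n h \<xi> \<le> ereal (pressure (cube n) h - (\<Sum>i<n. entropy (\<mu> i)))"
    by (rule mutual_pressure_le[OF approx])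
  ultimately show "mutual_pressure n h \<xi> = ereal (pressure (cube n) h - (\<Sum>i<n. entropy (\<mu> i)))"
    by simp
qed

theorem theorem4p4:
  fixes n :: nat
    and h :: "(nat \<Rightarrow> 'a::{finite,linorder}) \<Rightarrow> real"
    and \<mu> :: "nat \<Rightarrow> 'a \<Rightarrow> real"
    and \<xi> :: "nat \<Rightarrow> nat \<Rightarrow> 'a list"
  assumes prob: "\<forall>i<n. is_prob (\<mu> i)"
    and approx: "approx_seq n \<mu> \<xi>"
  shows "ereal (pressure (cube n) h) \<ge> mutual_pressure n h \<xi> + ereal (\<Sum>i<n. entropy (\<mu> i))
       \<and> ((ereal (pressure (cube n) h) = mutual_pressure n h \<xi> + ereal (\<Sum>i<n. entropy (\<mu> i)))
           \<longleftrightarrow> (\<forall>i<n. \<forall>t. \<mu> i t = gibbs_marginal n h i t))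
       \<and> ((\<forall>i<n. \<forall>t. \<mu> i t = gibbs_marginal n h i t)
           \<longleftrightarrow> (\<forall>i<n. \<forall>t. \<mu> i t = gibbs UNIV (partial_log_sum n h i) t))"
proof -
  define P where "P = pressure (cube n) h"
  define S where "S = (\<Sum>i<n. entropy (\<mu> i))"
  define MP where "MP = mutual_pressure n h \<xi>"
  have upper: "MP \<le> ereal (P - S)"
    unfolding MP_def P_def S_def by (rule mutual_pressure_le[OF approx])
  have "MP + ereal S \<le> ereal P" using upper by (cases MP) simp_all
  moreover have "ereal P = MP + ereal S \<longleftrightarrow> MP = ereal (P - S)" by (cases MP) auto
  moreover have "MP = ereal (P - S) \<longleftrightarrow> (\<forall>i<n. \<forall>t. \<mu> i t = gibbs_marginal n h i t)"
    unfolding MP_def P_def S_def by (rule mutual_pressure_eq_iff_gibbs_marginals[OF approx])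
  moreover have "(\<forall>i<n. \<forall>t. \<mu> i t = gibbs_marginal n h i t)
      \<longleftrightarrow> (\<forall>i<n. \<forall>t. \<mu> i t = gibbs UNIV (partial_log_sum n h i) t)"
    by (simp add: gibbs_marginal_eq_gibbs_partial_log_sum)
  ultimately show ?thesis unfolding P_def S_def MP_def by simp
qed

end
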